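(* Let $\phi$ be $\mu$-strongly convex, let $\alpha>0$, $\beta>0$, and let $\lambda\in[0,1]$ with $\lambda\le\frac{1}{2\alpha}$. Then $$\boldsymbol{T}^*:=\sup\{T^\lambda(z):z\notin\operatorname{argmin}\phi\}<\infty.$$
   Context: Let $\phi:\mathbb{R}^n\to\mathbb{R}$ be twice continuously differentiable, $\mu$-strongly convex ($\mu>0$), with $L$-Lipschitz gradient and minimum value $\phi^*$. For $z\in\mathbb{R}^n$, $x_z$ is the unique $C^1([0,\infty))\cap C^2((0,\infty))$ solution of $\ddot x(t)+\frac{\alpha}{t}\dot x(t)+\beta\nabla^2\phi(x(t))\dot x(t)+\nabla\phi(x(t))=0$ ($t>0$), $x(0)=z$, $\dot x(0)=0$. For $\lambda\in[0,1]$: $\varphi_{z,\lambda}(t)=\frac12\frac{d}{dt}\|\dot x_z(t)\|^2+\lambda\frac{\alpha}{t}\|\dot x_z(t)\|^2$ and $T^\lambda(z)=\inf\{t>0:\varphi_{z,\lambda}(t)\le0\}$. *)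

theory Defs
  imports "HOL-Analysis.Analysis"
begin

definition strongly_convex_on :: "real \<Rightarrow> 'a::real_inner set \<Rightarrow> ('a \<Rightarrow> real) \<Rightarrow> bool" where
  "strongly_convex_on \<mu> S f \<longleftrightarrow> convex S \<and>
     (\<forall>x\<in>S. \<forall>y\<in>S. \<forall>t::real. 0 \<le> t \<and> t \<le> 1 \<longrightarrow>
        f ((1 - t) *\<^sub>R x + t *\<^sub>R y) \<le> (1 - t) * f x + t * f y - \<mu> / 2 * t * (1 - t) * (norm (x - y))\<^sup>2)"

text \<open>Solution of  x'' + (alpha/t) x' + beta H(x) x' + g(x) = 0 on t > 0,
  x(0) = z, x'(0) = 0, with x in C^1([0,inf)) and C^2((0,inf)).
  Here g is the gradient and H the Hessian of phi.\<close>
definition is_solution ::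
  "('a::euclidean_space \<Rightarrow> 'a) \<Rightarrow> ('a \<Rightarrow> 'a \<Rightarrow>\<^sub>L 'a) \<Rightarrow> real \<Rightarrow> real \<Rightarrow> 'a \<Rightarrow> (real \<Rightarrow> 'a) \<Rightarrow> bool" where
  "is_solution g H \<alpha> \<beta> z x \<longleftrightarrow>
     (\<exists>v a. (\<forall>t\<ge>0. (x has_vector_derivative v t) (at t within {0..}))
          \<and> continuous_on {0..} v
          \<and> (\<forall>t>0. (v has_vector_derivative a t) (at t))
          \<and> continuous_on {0<..} a
          \<and> (\<forall>t>0. a t + (\<alpha> / t) *\<^sub>R v t + \<beta> *\<^sub>R blinfun_apply (H (x t)) (v t) + g (x t) = 0)
          \<and> x 0 = z \<and> v 0 = 0)"

definition varphi :: "(real \<Rightarrow> 'a::real_normed_vector) \<Rightarrow> real \<Rightarrow> real \<Rightarrow> real \<Rightarrow> real" where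
  "varphi x \<alpha> lam t =
     (1/2) * deriv (\<lambda>s. (norm (vector_derivative x (at s)))\<^sup>2) t
     + lam * (\<alpha> / t) * (norm (vector_derivative x (at t)))\<^sup>2"

text \<open>T^lambda(z) as an extended real; the infimum of the empty set is +infinity.\<close>
definition T_lambda :: "(real \<Rightarrow> 'a::real_normed_vector) \<Rightarrow> real \<Rightarrow> real \<Rightarrow> ereal" where
  "T_lambda x \<alpha> lam = Inf (ereal ` {t. t > 0 \<and> varphi x \<alpha> lam t \<le> 0})"

definition argmin_set :: "('a \<Rightarrow> real) \<Rightarrow> 'a set" where
  "argmin_set f = {x. \<forall>y. f x \<le> f y}"

end

theory Submission
  imports Defs
begin

text \<open>Along a trajectory the energy \<phi>(x) + |x'|^2/2 decreases at rate at least
  \<beta>\<mu>|x'|^2, while strong convexity allows it to drop by at most |\<nabla>\<phi>(z)|^2/(2\<mu>).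
  Near t = 0 the trajectory leaves z like x'(t) = -t \<nabla>\<phi>(z)/(\<alpha>+1) + O(t^2), so at a
  time s depending only on \<mu>, L, \<alpha>, \<beta> the speed is at least s|\<nabla>\<phi>(z)|/(2(\<alpha>+1)).
  As long as \<phi>_{z,\<lambda>} stays positive, t^(2\<lambda>\<alpha>) |x'(t)|^2 increases; since 2\<lambda>\<alpha> \<le> 1 this
  gives |x'(t)|^2 \<ge> s|x'(s)|^2/t, so the dissipated energy grows like ln t. Both the energy
  budget and this lower bound scale with |\<nabla>\<phi>(z)|^2, so the budget is exhausted before a
  time independent of z.\<close>

lemma has_vector_derivative_along_line:
  assumes "(f has_derivative f') (at (x + t *\<^sub>R d))"
  shows "((\<lambda>s. f (x + s *\<^sub>R d)) has_vector_derivative f' d) (at t)"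
proof -
  have "((\<lambda>s. x + s *\<^sub>R d) has_derivative (\<lambda>s. s *\<^sub>R d)) (at t)"
    by (auto intro!: derivative_eq_intros)
  from has_derivative_compose[OF this assms] show ?thesis
    by (simp add: has_vector_derivative_def o_def
        linear_cmul[OF has_derivative_linear[OF assms]])
qed

lemma has_real_derivative_inner_along_line:
  assumes "(f has_derivative f') (at (x + t *\<^sub>R d))"
  shows "((\<lambda>s. f (x + s *\<^sub>R d) \<bullet> u) has_real_derivative f' d \<bullet> u) (at t)"
  using bounded_linear.has_vector_derivative[OF bounded_linear_inner_left
      has_vector_derivative_along_line[OF assms]]
  by (simp add: has_real_derivative_iff_has_vector_derivative)

lemma DERIV_le_of_increments_le:
  fixes k :: "real \<Rightarrow> real"
  assumes "(k has_real_derivative D) (at 0)" and "\<delta> > 0"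
    and "\<And>t. 0 < t \<Longrightarrow> t < \<delta> \<Longrightarrow> k t - k 0 \<le> t * c"
  shows "D \<le> c"
proof (rule tendsto_upperbound)
  show "((\<lambda>t. (k t - k 0) / t) \<longlongrightarrow> D) (at_right 0)"
    using assms(1) unfolding has_field_derivative_iff by (auto intro: tendsto_mono at_le)
  show "\<forall>\<^sub>F t in at_right 0. (k t - k 0) / t \<le> c"
    using eventually_at_right_real[OF \<open>\<delta> > 0\<close>]
    by eventually_elim (use assms(3) in \<open>auto simp: divide_le_eq mult.commute\<close>)
qed simp

lemma strongly_convex_on_first_order:
  fixes \<phi> :: "'a::euclidean_space \<Rightarrow> real"
  assumes grad: "\<And>x. (\<phi> has_derivative (\<lambda>h. g x \<bullet> h)) (at x)"
    and sconv: "strongly_convex_on \<mu> UNIV \<phi>"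
  shows "\<phi> y \<ge> \<phi> x + g x \<bullet> (y - x) + \<mu> / 2 * (norm (y - x))\<^sup>2"
proof -
  define k where "k t = \<phi> (x + t *\<^sub>R (y - x)) - \<mu> / 2 * t\<^sup>2 * (norm (y - x))\<^sup>2" for t
  have "(k has_real_derivative g x \<bullet> (y - x)) (at 0)"
    using has_vector_derivative_along_line[OF grad[of "x + 0 *\<^sub>R (y - x)"]]
    unfolding k_def has_real_derivative_iff_has_vector_derivative[symmetric]
    by (auto intro!: derivative_eq_intros)
  then have "g x \<bullet> (y - x) \<le> \<phi> y - \<phi> x - \<mu> / 2 * (norm (y - x))\<^sup>2"
  proof (rule DERIV_le_of_increments_le[OF _ zero_less_one])
    fix t :: real assume t: "0 < t" "t < 1"
    have "\<phi> ((1 - t) *\<^sub>R x + t *\<^sub>R y) \<le> (1 - t) * \<phi> x + t * \<phi> y - \<mu> / 2 * t * (1 - t) * (norm (x - y))\<^sup>2"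
      using sconv t unfolding strongly_convex_on_def by auto
    moreover have "(1 - t) *\<^sub>R x + t *\<^sub>R y = x + t *\<^sub>R (y - x)"
      by (simp add: algebra_simps)
    ultimately show "k t - k 0 \<le> t * (\<phi> y - \<phi> x - \<mu> / 2 * (norm (y - x))\<^sup>2)"
      by (simp add: k_def norm_minus_commute power2_eq_square algebra_simps) (simp add: field_simps)
  qed
  then show ?thesis by simp
qed

lemma strongly_convex_on_gradient_monotone:
  fixes \<phi> :: "'a::euclidean_space \<Rightarrow> real"
  assumes grad: "\<And>x. (\<phi> has_derivative (\<lambda>h. g x \<bullet> h)) (at x)"
    and sconv: "strongly_convex_on \<mu> UNIV \<phi>"
  shows "(g y - g x) \<bullet> (y - x) \<ge> \<mu> * (norm (y - x))\<^sup>2"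
  using strongly_convex_on_first_order[OF grad sconv, of x y]
    strongly_convex_on_first_order[OF grad sconv, of y x]
  by (simp add: norm_minus_commute inner_diff_left inner_diff_right)

lemma strongly_convex_on_hessian_lower_bound:
  fixes \<phi> :: "'a::euclidean_space \<Rightarrow> real"
  assumes grad: "\<And>x. (\<phi> has_derivative (\<lambda>h. g x \<bullet> h)) (at x)"
    and hess: "\<And>x. (g has_derivative blinfun_apply (H x)) (at x)"
    and sconv: "strongly_convex_on \<mu> UNIV \<phi>"
  shows "h \<bullet> blinfun_apply (H x) h \<ge> \<mu> * (norm h)\<^sup>2"
proof -
  have "((\<lambda>t. - (g (x + t *\<^sub>R h) \<bullet> h)) has_real_derivative - (blinfun_apply (H x) h \<bullet> h)) (at 0)"
    using has_real_derivative_inner_along_line[OF hess[of "x + 0 *\<^sub>R h"]]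
    by (auto intro!: derivative_eq_intros)
  then have "- (blinfun_apply (H x) h \<bullet> h) \<le> - (\<mu> * (norm h)\<^sup>2)"
  proof (rule DERIV_le_of_increments_le[OF _ zero_less_one])
    fix t :: real assume t: "0 < t" "t < 1"
    have "t * (t * (\<mu> * (norm h)\<^sup>2)) \<le> t * ((g (x + t *\<^sub>R h) - g x) \<bullet> h)"
      using strongly_convex_on_gradient_monotone[OF grad sconv, of x "x + t *\<^sub>R h"] t
      by (simp add: power2_eq_square algebra_simps)
    then show "- (g (x + t *\<^sub>R h) \<bullet> h) - - (g (x + 0 *\<^sub>R h) \<bullet> h) \<le> t * - (\<mu> * (norm h)\<^sup>2)"
      using t by (simp add: inner_diff_left)
  qed
  then show ?thesis by (simp add: inner_commute)
qed

lemma lipschitz_gradient_hessian_bound: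
  fixes g :: "'a::real_normed_vector \<Rightarrow> 'b::real_inner"
  assumes hess: "\<And>x. (g has_derivative blinfun_apply (H x)) (at x)"
    and lip: "L-lipschitz_on UNIV g"
  shows "norm (blinfun_apply (H x) h) \<le> L * norm h"
proof -
  define u where "u = blinfun_apply (H x) h"
  have "((\<lambda>t. g (x + t *\<^sub>R h) \<bullet> u) has_real_derivative u \<bullet> u) (at 0)"
    using has_real_derivative_inner_along_line[OF hess[of "x + 0 *\<^sub>R h"]] by (simp add: u_def)
  then have "u \<bullet> u \<le> L * norm h * norm u"
  proof (rule DERIV_le_of_increments_le[OF _ zero_less_one])
    fix t :: real assume t: "0 < t" "t < 1"
    have "(g (x + t *\<^sub>R h) - g x) \<bullet> u \<le> norm (g (x + t *\<^sub>R h) - g x) * norm u"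
      by (rule norm_cauchy_schwarz)
    also have "\<dots> \<le> L * norm (t *\<^sub>R h) * norm u"
      using lipschitz_onD[OF lip, of "x + t *\<^sub>R h" x] t by (simp add: dist_norm mult_right_mono)
    finally show "g (x + t *\<^sub>R h) \<bullet> u - g (x + 0 *\<^sub>R h) \<bullet> u \<le> t * (L * norm h * norm u)"
      using t by (simp add: inner_diff_left algebra_simps)
  qed
  then have "norm u * norm u \<le> (L * norm h) * norm u"
    by (simp add: power2_norm_eq_inner[symmetric] power2_eq_square)
  then show ?thesis
    using lipschitz_on_nonneg[OF lip] unfolding u_def
    by (cases "norm u = 0") (auto simp: mult_le_cancel_right)
qed

lemma strongly_convex_on_lower_bound:
  fixes \<phi> :: "'a::euclidean_space \<Rightarrow> real"
  assumes grad: "\<And>x. (\<phi> has_derivative (\<lambda>h. g x \<bullet> h)) (at x)"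
    and sconv: "strongly_convex_on \<mu> UNIV \<phi>" and "\<mu> > 0"
  shows "\<phi> y \<ge> \<phi> z - (norm (g z))\<^sup>2 / (2 * \<mu>)"
proof -
  define r where "r = norm (y - z)"
  have "g z \<bullet> (y - z) \<ge> - (norm (g z) * r)"
    using norm_cauchy_schwarz[of "- g z" "y - z"] by (simp add: r_def)
  moreover have "\<mu> / 2 * r\<^sup>2 - norm (g z) * r + (norm (g z))\<^sup>2 / (2 * \<mu>) = (\<mu> * r - norm (g z))\<^sup>2 / (2 * \<mu>)"
    using \<open>\<mu> > 0\<close> by (simp add: power2_eq_square field_simps)
  moreover have "(\<mu> * r - norm (g z))\<^sup>2 / (2 * \<mu>) \<ge> 0"
    using \<open>\<mu> > 0\<close> by simp
  ultimately show ?thesis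
    using strongly_convex_on_first_order[OF grad sconv, of z y, folded r_def] by linarith
qed

lemma strongly_convex_on_gradient_nonzero:
  fixes \<phi> :: "'a::euclidean_space \<Rightarrow> real"
  assumes grad: "\<And>x. (\<phi> has_derivative (\<lambda>h. g x \<bullet> h)) (at x)"
    and sconv: "strongly_convex_on \<mu> UNIV \<phi>" and "\<mu> > 0"
    and "z \<notin> argmin_set \<phi>"
  shows "g z \<noteq> 0"
  using strongly_convex_on_lower_bound[OF grad sconv \<open>\<mu> > 0\<close>, of z] assms(4)
  by (auto simp: argmin_set_def)

lemma norm_diff_le_of_vector_derivative_bound:
  fixes f :: "real \<Rightarrow> 'a::real_normed_vector"
  assumes "a \<le> b" and "continuous_on {a..b} f"
    and "\<And>s. a < s \<Longrightarrow> s < b \<Longrightarrow> (f has_vector_derivative f' s) (at s)"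
    and "\<And>s. a < s \<Longrightarrow> s < b \<Longrightarrow> norm (f' s) \<le> C"
  shows "norm (f b - f a) \<le> (b - a) * C"
proof (cases "a = b")
  case False
  then have "norm (f b - f a) \<le> b * C - a * C"
    using assms by (intro differentiable_bound_general[of a b f "\<lambda>s. s * C" f' "\<lambda>_. C"])
      (auto intro!: continuous_intros derivative_eq_intros)
  then show ?thesis by (simp add: left_diff_distrib)
qed simp

text \<open>The constants of the argument: \<open>force_const\<close> and \<open>remainder_const\<close> bound, relative
  to |\<nabla>\<phi>(z)|, the size and the drift of \<beta>\<nabla>^2\<phi>(x)x' + \<nabla>\<phi>(x) on [0,1]; \<open>initial_time\<close>
  makes the O(t^2) remainder of the velocity at most half its linear part; and the exponent
  in \<open>exit_time_bound\<close> is what makes the logarithmic energy loss exceed the budget.\<close>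

definition force_const :: "real \<Rightarrow> real \<Rightarrow> real \<Rightarrow> real" where
  "force_const \<mu> L \<beta> = \<beta> * L / sqrt \<mu> + 1 + L / sqrt \<mu>"

definition remainder_const :: "real \<Rightarrow> real \<Rightarrow> real \<Rightarrow> real" where
  "remainder_const \<mu> L \<beta> = \<beta> * L * force_const \<mu> L \<beta> + L / sqrt \<mu>"

definition initial_time :: "real \<Rightarrow> real \<Rightarrow> real \<Rightarrow> real \<Rightarrow> real" where
  "initial_time \<mu> L \<alpha> \<beta> = min 1 (1 / (2 * (\<alpha> + 1) * (remainder_const \<mu> L \<beta> + 1)))"

definition exit_time_bound :: "real \<Rightarrow> real \<Rightarrow> real \<Rightarrow> real \<Rightarrow> real" where
  "exit_time_bound \<mu> L \<alpha> \<beta> = initial_time \<mu> L \<alpha> \<beta> *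
     exp (2 * (\<alpha> + 1)\<^sup>2 / (\<beta> * \<mu>\<^sup>2 * initial_time \<mu> L \<alpha> \<beta> ^ 3) + 1)"

locale hessian_damped_trajectory =
  fixes \<phi> :: "'a::euclidean_space \<Rightarrow> real"
    and g :: "'a \<Rightarrow> 'a"
    and H :: "'a \<Rightarrow> 'a \<Rightarrow>\<^sub>L 'a"
    and \<mu> L \<alpha> \<beta> :: real
    and x v a :: "real \<Rightarrow> 'a" and z :: 'a
  assumes grad: "\<And>x. (\<phi> has_derivative (\<lambda>h. g x \<bullet> h)) (at x)"
    and hess: "\<And>x. (g has_derivative blinfun_apply (H x)) (at x)"
    and mu_pos: "\<mu> > 0"
    and sconv: "strongly_convex_on \<mu> UNIV \<phi>"
    and lip: "L-lipschitz_on UNIV g"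
    and alpha_pos: "\<alpha> > 0" and beta_pos: "\<beta> > 0"
    and x_deriv: "\<And>t. t \<ge> 0 \<Longrightarrow> (x has_vector_derivative v t) (at t within {0..})"
    and v_cont: "continuous_on {0..} v"
    and v_deriv: "\<And>t. t > 0 \<Longrightarrow> (v has_vector_derivative a t) (at t)"
    and ode: "\<And>t. t > 0 \<Longrightarrow> a t + (\<alpha> / t) *\<^sub>R v t + \<beta> *\<^sub>R blinfun_apply (H (x t)) (v t) + g (x t) = 0"
    and x_0: "x 0 = z" and v_0: "v 0 = 0"
begin

lemma L_nonneg: "L \<ge> 0"
  using lipschitz_on_nonneg[OF lip] .

lemma x_has_vector_derivative: "t > 0 \<Longrightarrow> (x has_vector_derivative v t) (at t)"
  using x_deriv[of t] at_within_interior[of t "{0..}"] by simp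

lemma x_continuous: "continuous_on {0..} x"
  using x_deriv by (auto simp: continuous_on_eq_continuous_within intro: has_vector_derivative_continuous)

lemma speed_sq_has_derivative:
  assumes "t > 0"
  shows "((\<lambda>s. v s \<bullet> v s) has_real_derivative 2 * (v t \<bullet> a t)) (at t)"
  using has_derivative_inner[OF v_deriv[OF assms, unfolded has_vector_derivative_def]
      v_deriv[OF assms, unfolded has_vector_derivative_def]]
  by (simp add: has_field_derivative_def inner_commute algebra_simps mult_commute_abs)

definition energy :: "real \<Rightarrow> real" where
  "energy t = \<phi> (x t) + (v t \<bullet> v t) / 2"

lemma energy_has_derivative:
  assumes "t > 0"
  shows "(energy has_real_derivative g (x t) \<bullet> v t + v t \<bullet> a t) (at t)"
proof -
  have "((\<lambda>s. \<phi> (x s)) has_real_derivative g (x t) \<bullet> v t) (at t)"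
    using has_derivative_compose[OF x_has_vector_derivative[OF assms, unfolded has_vector_derivative_def] grad]
    by (simp add: has_field_derivative_def o_def mult_commute_abs)
  then show ?thesis
    unfolding energy_def using speed_sq_has_derivative[OF assms]
    by (auto intro!: derivative_eq_intros)
qed

lemma energy_dissipation:
  assumes "t > 0"
  shows "g (x t) \<bullet> v t + v t \<bullet> a t \<le> - \<beta> * \<mu> * (v t \<bullet> v t)"
proof -
  have "v t \<bullet> (a t + (\<alpha> / t) *\<^sub>R v t + \<beta> *\<^sub>R blinfun_apply (H (x t)) (v t) + g (x t)) = 0"
    using ode[OF assms] by simp
  then have "v t \<bullet> a t = - (\<alpha> / t) * (v t \<bullet> v t) - \<beta> * (v t \<bullet> blinfun_apply (H (x t)) (v t)) - v t \<bullet> g (x t)"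
    by (simp add: inner_add_right algebra_simps)
  moreover have "\<beta> * (\<mu> * (v t \<bullet> v t)) \<le> \<beta> * (v t \<bullet> blinfun_apply (H (x t)) (v t))"
    using strongly_convex_on_hessian_lower_bound[OF grad hess sconv, of "v t"] beta_pos
    by (simp add: power2_norm_eq_inner)
  moreover have "(\<alpha> / t) * (v t \<bullet> v t) \<ge> 0"
    using assms alpha_pos by simp
  ultimately show ?thesis
    by (simp add: inner_commute)
qed


lemma energy_continuous: "continuous_on {0..} energy"
proof -
  have "continuous_on UNIV \<phi>"
    using grad by (intro has_derivative_continuous_on) auto
  then show ?thesis
    unfolding energy_def
    by (intro continuous_intros continuous_on_compose2[OF _ x_continuous] v_cont) auto
qed

lemma energy_antimono:
  assumes "0 \<le> s" "s \<le> t"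
  shows "energy t \<le> energy s"
proof (rule DERIV_nonpos_imp_decreasing_open[OF assms(2)])
  show "continuous_on {s..t} energy"
    using energy_continuous by (rule continuous_on_subset) (use assms in auto)
  fix u assume "s < u" "u < t"
  then have "u > 0" using assms by simp
  moreover have "- \<beta> * \<mu> * (v u \<bullet> v u) \<le> 0"
    using beta_pos mu_pos by simp
  ultimately show "\<exists>D. (energy has_real_derivative D) (at u) \<and> D \<le> 0"
    using energy_has_derivative energy_dissipation by (meson order_trans)
qed

lemma energy_le_initial: "t \<ge> 0 \<Longrightarrow> energy t \<le> \<phi> z"
  using energy_antimono[of 0 t] by (simp add: energy_def x_0 v_0)

lemma energy_lower_bound: "energy t \<ge> \<phi> z - (norm (g z))\<^sup>2 / (2 * \<mu>)"
proof -
  have "v t \<bullet> v t \<ge> 0" by simp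
  then show ?thesis
    using strongly_convex_on_lower_bound[OF grad sconv mu_pos, where y = "x t" and z = z]
    unfolding energy_def by linarith
qed

lemma speed_le:
  assumes "t \<ge> 0"
  shows "norm (v t) \<le> norm (g z) / sqrt \<mu>"
proof (rule power2_le_imp_le)
  have "(norm (v t))\<^sup>2 \<le> 2 * ((norm (g z))\<^sup>2 / (2 * \<mu>))"
    using energy_le_initial[OF assms]
      strongly_convex_on_lower_bound[OF grad sconv mu_pos, where y = "x t" and z = z]
    unfolding energy_def power2_norm_eq_inner[of "v t"] by linarith
  also have "\<dots> = (norm (g z) / sqrt \<mu>)\<^sup>2"
    using mu_pos by (simp add: power_divide)
  finally show "(norm (v t))\<^sup>2 \<le> (norm (g z) / sqrt \<mu>)\<^sup>2" .
  show "0 \<le> norm (g z) / sqrt \<mu>"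
    using mu_pos by simp
qed

lemma displacement_le:
  assumes "t \<ge> 0"
  shows "norm (x t - z) \<le> t * (norm (g z) / sqrt \<mu>)"
proof -
  have "norm (x t - x 0) \<le> (t - 0) * (norm (g z) / sqrt \<mu>)"
  proof (rule norm_diff_le_of_vector_derivative_bound[OF assms])
    show "continuous_on {0..t} x"
      using x_continuous by (rule continuous_on_subset) auto
  qed (auto intro: x_has_vector_derivative speed_le)
  then show ?thesis by (simp add: x_0)
qed


definition force :: "real \<Rightarrow> 'a" where
  "force t = \<beta> *\<^sub>R blinfun_apply (H (x t)) (v t) + g (x t)"

lemma hessian_term_le: "norm (\<beta> *\<^sub>R blinfun_apply (H (x t)) (v t)) \<le> \<beta> * L * norm (v t)"
  using lipschitz_gradient_hessian_bound[OF hess lip, of "x t" "v t"] beta_pos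
  by (simp add: mult.assoc mult_left_mono)

lemma gradient_drift_le:
  assumes "t \<ge> 0"
  shows "norm (g (x t) - g z) \<le> t * (L * norm (g z) / sqrt \<mu>)"
proof -
  have "norm (g (x t) - g z) \<le> L * norm (x t - z)"
    using lipschitz_onD[OF lip, of "x t" z] by (simp add: dist_norm)
  also have "\<dots> \<le> L * (t * (norm (g z) / sqrt \<mu>))"
    using displacement_le[OF assms] L_nonneg by (rule mult_left_mono)
  finally show ?thesis by (simp add: mult.left_commute)
qed

lemma force_le:
  assumes "0 \<le> t" "t \<le> 1"
  shows "norm (force t) \<le> norm (g z) * force_const \<mu> L \<beta>"
proof -
  have "norm (force t) \<le> \<beta> * L * norm (v t) + (norm (g z) + norm (g (x t) - g z))"
    unfolding force_def
    by (rule order_trans[OF norm_triangle_ineq add_mono[OF hessian_term_le norm_triangle_sub]])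
  moreover have "\<beta> * L * norm (v t) \<le> \<beta> * L * (norm (g z) / sqrt \<mu>)"
    using speed_le[OF assms(1)] beta_pos L_nonneg by (intro mult_left_mono) auto
  moreover have "t * (L * norm (g z) / sqrt \<mu>) \<le> 1 * (L * norm (g z) / sqrt \<mu>)"
    using assms L_nonneg mu_pos by (intro mult_right_mono) auto
  then have "norm (g (x t) - g z) \<le> L * norm (g z) / sqrt \<mu>"
    using gradient_drift_le[OF assms(1)] by simp
  ultimately show ?thesis
    by (simp add: force_const_def algebra_simps)
qed

lemma weighted_velocity_has_derivative:
  assumes "t > 0"
  shows "((\<lambda>s. s powr \<alpha> *\<^sub>R v s) has_vector_derivative - (t powr \<alpha>) *\<^sub>R force t) (at t)"
proof -
  have "t powr \<alpha> *\<^sub>R a t + (\<alpha> * t powr (\<alpha> - 1)) *\<^sub>R v t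
      = t powr \<alpha> *\<^sub>R (a t + (\<alpha> / t) *\<^sub>R v t)"
    using assms by (simp add: powr_diff algebra_simps)
  also have "a t + (\<alpha> / t) *\<^sub>R v t = - force t"
    unfolding force_def eq_neg_iff_add_eq_0 using ode[OF assms] by (simp add: add.assoc)
  finally show ?thesis
    using has_vector_derivative_scaleR[OF has_real_derivative_powr[OF assms, of \<alpha>] v_deriv[OF assms]]
    by simp
qed

lemma weighted_velocity_continuous: "continuous_on {0..t} (\<lambda>s. s powr \<alpha> *\<^sub>R v s)"
  using alpha_pos
  by (intro continuous_intros continuous_on_powr' continuous_on_subset[OF v_cont]) auto

lemma speed_le_small_time:
  assumes "0 \<le> t" "t \<le> 1"
  shows "norm (v t) \<le> t * (norm (g z) * force_const \<mu> L \<beta>)"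
proof (cases "t = 0")
  case False
  then have "t > 0" using assms by simp
  have "norm (t powr \<alpha> *\<^sub>R v t - 0 powr \<alpha> *\<^sub>R v 0) \<le> (t - 0) * (t powr \<alpha> * (norm (g z) * force_const \<mu> L \<beta>))"
  proof (rule norm_diff_le_of_vector_derivative_bound[OF assms(1) weighted_velocity_continuous])
    fix s assume s: "0 < s" "s < t"
    then show "((\<lambda>s. s powr \<alpha> *\<^sub>R v s) has_vector_derivative - (s powr \<alpha>) *\<^sub>R force s) (at s)"
      by (intro weighted_velocity_has_derivative) auto
    have "s powr \<alpha> * norm (force s) \<le> t powr \<alpha> * (norm (g z) * force_const \<mu> L \<beta>)"
      using s assms alpha_pos by (intro mult_mono powr_mono2 force_le) auto
    then show "norm (- (s powr \<alpha>) *\<^sub>R force s) \<le> t powr \<alpha> * (norm (g z) * force_const \<mu> L \<beta>)"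
      by simp
  qed
  then show ?thesis
    using \<open>t > 0\<close> by (simp add: v_0 mult.left_commute[of "t powr \<alpha>"])
qed (simp add: v_0)


lemma remainder_const_nonneg: "remainder_const \<mu> L \<beta> \<ge> 0"
  using L_nonneg beta_pos mu_pos by (simp add: remainder_const_def force_const_def)

lemma force_near_initial:
  assumes "0 \<le> t" "t \<le> 1"
  shows "norm (force t - g z) \<le> t * (norm (g z) * remainder_const \<mu> L \<beta>)"
proof -
  have "norm (force t - g z) \<le> \<beta> * L * norm (v t) + norm (g (x t) - g z)"
    unfolding force_def
    by (rule order_trans[OF _ add_mono[OF hessian_term_le order_refl]])
      (metis add_diff_eq norm_triangle_ineq)
  also have "\<dots> \<le> \<beta> * L * (t * (norm (g z) * force_const \<mu> L \<beta>)) + t * (L * norm (g z) / sqrt \<mu>)"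
    using speed_le_small_time[OF assms] gradient_drift_le[OF assms(1)] beta_pos L_nonneg
    by (intro add_mono mult_left_mono) auto
  finally show ?thesis
    by (simp add: remainder_const_def algebra_simps)
qed

lemma velocity_expansion:
  assumes "0 < t" "t \<le> 1"
  shows "norm (v t + (t / (\<alpha> + 1)) *\<^sub>R g z) \<le> t\<^sup>2 * (norm (g z) * remainder_const \<mu> L \<beta>)"
proof -
  define f where "f s = s powr \<alpha> *\<^sub>R v s + (s powr (\<alpha> + 1) / (\<alpha> + 1)) *\<^sub>R g z" for s
  define C where "C = t powr \<alpha> * (t * (norm (g z) * remainder_const \<mu> L \<beta>))"
  have "norm (f t - f 0) \<le> (t - 0) * C"
  proof (rule norm_diff_le_of_vector_derivative_bound)
    show "continuous_on {0..t} f"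
      unfolding f_def using alpha_pos
      by (intro continuous_on_add[OF weighted_velocity_continuous] continuous_intros continuous_on_powr') auto
    fix s assume s: "0 < s" "s < t"
    have "((\<lambda>s. s powr (\<alpha> + 1) / (\<alpha> + 1)) has_real_derivative s powr \<alpha>) (at s)"
      using has_real_derivative_powr[OF s(1), of "\<alpha> + 1"] alpha_pos s
      by (auto intro!: derivative_eq_intros)
    from has_vector_derivative_add[OF weighted_velocity_has_derivative[OF s(1)]
        has_vector_derivative_scaleR[OF this has_vector_derivative_const[of "g z"]]]
    show "(f has_vector_derivative - (s powr \<alpha>) *\<^sub>R (force s - g z)) (at s)"
      unfolding f_def by (simp add: algebra_simps)
    have "s powr \<alpha> * norm (force s - g z) \<le> C"
    proof -
      have "norm (force s - g z) \<le> s * (norm (g z) * remainder_const \<mu> L \<beta>)"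
        using force_near_initial s assms by simp
      also have "\<dots> \<le> t * (norm (g z) * remainder_const \<mu> L \<beta>)"
        using s remainder_const_nonneg by (intro mult_right_mono) auto
      finally show ?thesis
        unfolding C_def using s alpha_pos by (intro mult_mono powr_mono2) auto
    qed
    then show "norm (- (s powr \<alpha>) *\<^sub>R (force s - g z)) \<le> C" by simp
  qed (use assms in simp)
  moreover have "f 0 = 0"
    using alpha_pos by (simp add: f_def v_0)
  moreover have "f t = t powr \<alpha> *\<^sub>R (v t + (t / (\<alpha> + 1)) *\<^sub>R g z)"
    using assms by (simp add: f_def powr_add scaleR_add_right)
  ultimately have "t powr \<alpha> * norm (v t + (t / (\<alpha> + 1)) *\<^sub>R g z)
      \<le> t powr \<alpha> * (t\<^sup>2 * (norm (g z) * remainder_const \<mu> L \<beta>))"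
    by (simp add: C_def power2_eq_square mult_ac)
  then show ?thesis
    using assms by simp
qed


lemma initial_time_pos: "0 < initial_time \<mu> L \<alpha> \<beta>" "initial_time \<mu> L \<alpha> \<beta> \<le> 1"
  using alpha_pos remainder_const_nonneg by (auto simp: initial_time_def)

lemma initial_time_remainder_le:
  "initial_time \<mu> L \<alpha> \<beta> * remainder_const \<mu> L \<beta> \<le> 1 / (2 * (\<alpha> + 1))"
proof -
  let ?s = "initial_time \<mu> L \<alpha> \<beta>" and ?K = "remainder_const \<mu> L \<beta>"
  have "?s * ?K \<le> ?s * (?K + 1)"
    using initial_time_pos by simp
  also have "\<dots> \<le> 1 / (2 * (\<alpha> + 1) * (?K + 1)) * (?K + 1)"
    using remainder_const_nonneg by (intro mult_right_mono) (auto simp: initial_time_def)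
  also have "\<dots> = 1 / (2 * (\<alpha> + 1))"
    using remainder_const_nonneg by simp
  finally show ?thesis .
qed

lemma speed_at_initial_time:
  "norm (v (initial_time \<mu> L \<alpha> \<beta>)) \<ge> initial_time \<mu> L \<alpha> \<beta> * norm (g z) / (2 * (\<alpha> + 1))"
proof -
  let ?s = "initial_time \<mu> L \<alpha> \<beta>" and ?K = "remainder_const \<mu> L \<beta>"
  define c where "c = ?s * norm (g z) / (2 * (\<alpha> + 1))"
  have "2 * c = norm ((?s / (\<alpha> + 1)) *\<^sub>R g z)"
    using initial_time_pos alpha_pos by (simp add: c_def field_simps)
  also have "\<dots> \<le> norm (v ?s) + norm (v ?s + (?s / (\<alpha> + 1)) *\<^sub>R g z)"
    by (metis add_diff_cancel_left' norm_triangle_ineq4 norm_minus_commute)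
  also have "norm (v ?s + (?s / (\<alpha> + 1)) *\<^sub>R g z) \<le> (?s * norm (g z)) * (?s * ?K)"
    using velocity_expansion[OF initial_time_pos] by (simp add: power2_eq_square mult_ac)
  also have "\<dots> \<le> (?s * norm (g z)) * (1 / (2 * (\<alpha> + 1)))"
    using initial_time_pos initial_time_remainder_le by (intro mult_left_mono) auto
  finally have "2 * c \<le> norm (v ?s) + c"
    by (simp add: c_def)
  then show ?thesis
    by (simp add: c_def)
qed

lemma varphi_eq:
  assumes "t > 0"
  shows "varphi x \<alpha> lam t = v t \<bullet> a t + lam * (\<alpha> / t) * (v t \<bullet> v t)"
proof -
  have v_eq: "vector_derivative x (at s) = v s" if "s > 0" for s
    using x_has_vector_derivative[OF that] by (rule vector_derivative_at)
  have "((\<lambda>s. (norm (vector_derivative x (at s)))\<^sup>2) has_real_derivative 2 * (v t \<bullet> a t)) (at t)"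
  proof (rule has_field_derivative_transform_within_open[OF speed_sq_has_derivative[OF assms], of "{0<..}"])
    show "\<And>s. s \<in> {0<..} \<Longrightarrow> v s \<bullet> v s = (norm (vector_derivative x (at s)))\<^sup>2"
      using v_eq by (simp add: power2_norm_eq_inner)
  qed (use assms in auto)
  then show ?thesis
    unfolding varphi_def using v_eq[OF assms] by (simp add: DERIV_imp_deriv power2_norm_eq_inner)
qed

lemma speed_sq_lower_bound:
  assumes lam: "0 \<le> lam" "lam \<le> 1 / (2 * \<alpha>)"
    and st: "0 < s" "s \<le> t"
    and varphi_pos: "\<And>u. s < u \<Longrightarrow> u < t \<Longrightarrow> varphi x \<alpha> lam u > 0"
  shows "s * (v s \<bullet> v s) / t \<le> v t \<bullet> v t"
proof -
  define p where "p = 2 * lam * \<alpha>"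
  have p: "0 \<le> p" "p \<le> 1"
    using lam alpha_pos by (auto simp: p_def field_simps)
  define P where "P u = u powr p * (v u \<bullet> v u)" for u
  have P_deriv: "(P has_real_derivative 2 * u powr p * varphi x \<alpha> lam u) (at u)" if "u > 0" for u
  proof -
    have "(P has_real_derivative p * u powr (p - 1) * (v u \<bullet> v u) + 2 * (v u \<bullet> a u) * u powr p) (at u)"
      unfolding P_def by (rule DERIV_mult[OF has_real_derivative_powr[OF that] speed_sq_has_derivative[OF that]])
    moreover have "p * u powr (p - 1) * (v u \<bullet> v u) + 2 * (v u \<bullet> a u) * u powr p
        = 2 * u powr p * varphi x \<alpha> lam u"
      unfolding varphi_eq[OF that] p_def using that by (simp add: powr_diff field_simps)
    ultimately show ?thesis
      by simp
  qed
  have "P s \<le> P t"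
  proof (rule DERIV_nonneg_imp_increasing_open[OF st(2)])
    fix u assume "s < u" "u < t"
    then show "\<exists>D. (P has_real_derivative D) (at u) \<and> 0 \<le> D"
      using P_deriv[of u] varphi_pos[of u] st by (intro exI[of _ "2 * u powr p * varphi x \<alpha> lam u"]) auto
  next
    show "continuous_on {s..t} P"
      using P_deriv st by (intro DERIV_continuous_on[of _ _ "\<lambda>u. 2 * u powr p * varphi x \<alpha> lam u"])
        (auto intro: has_field_derivative_at_within)
  qed
  then have "(s / t) powr p * (v s \<bullet> v s) \<le> v t \<bullet> v t"
    using st by (simp add: P_def powr_divide field_simps)
  moreover have "s / t \<le> (s / t) powr p"
    using powr_mono'[of p 1 "s / t"] p st by simp
  then have "s / t * (v s \<bullet> v s) \<le> (s / t) powr p * (v s \<bullet> v s)"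
    by (rule mult_right_mono) simp
  ultimately show ?thesis
    by simp
qed

lemma energy_drop_ge_log:
  assumes st: "0 < s" "s \<le> t"
    and speed: "\<And>u. s < u \<Longrightarrow> u < t \<Longrightarrow> K / u \<le> v u \<bullet> v u"
  shows "\<beta> * \<mu> * K * (ln t - ln s) \<le> energy s - energy t"
proof -
  define F where "F u = energy u + \<beta> * \<mu> * K * ln u" for u
  have "F t \<le> F s"
  proof (rule DERIV_nonpos_imp_decreasing_open[OF st(2)])
    show "continuous_on {s..t} F"
      unfolding F_def using st
      by (intro continuous_intros continuous_on_subset[OF energy_continuous]) auto
    fix u assume u: "s < u" "u < t"
    then have "u > 0" using st by simp
    have "\<beta> * \<mu> * (K / u) \<le> \<beta> * \<mu> * (v u \<bullet> v u)"
      using speed[OF u] beta_pos mu_pos by (intro mult_left_mono) auto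
    then have "g (x u) \<bullet> v u + v u \<bullet> a u + \<beta> * \<mu> * K / u \<le> 0"
      using energy_dissipation[OF \<open>u > 0\<close>] by simp
    moreover have "(F has_real_derivative g (x u) \<bullet> v u + v u \<bullet> a u + \<beta> * \<mu> * K / u) (at u)"
      unfolding F_def using energy_has_derivative[OF \<open>u > 0\<close>] \<open>u > 0\<close>
      by (auto intro!: derivative_eq_intros)
    ultimately show "\<exists>D. (F has_real_derivative D) (at u) \<and> D \<le> 0"
      by blast
  qed
  then show ?thesis
    by (simp add: F_def algebra_simps)
qed

lemma energy_loss_le_budget:
  assumes lam: "0 \<le> lam" "lam \<le> 1 / (2 * \<alpha>)"
    and sT: "0 < s" "s \<le> T"
    and varphi_pos: "\<And>u. s < u \<Longrightarrow> u \<le> T \<Longrightarrow> varphi x \<alpha> lam u > 0"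
  shows "\<beta> * \<mu> * (s * (v s \<bullet> v s)) * (ln T - ln s) \<le> (norm (g z))\<^sup>2 / (2 * \<mu>)"
proof -
  have "s * (v s \<bullet> v s) / u \<le> v u \<bullet> v u" if "s < u" "u < T" for u
    using that by (intro speed_sq_lower_bound[OF lam sT(1)] varphi_pos) auto
  then have "\<beta> * \<mu> * (s * (v s \<bullet> v s)) * (ln T - ln s) \<le> energy s - energy T"
    by (rule energy_drop_ge_log[OF sT])
  also have "\<dots> \<le> (norm (g z))\<^sup>2 / (2 * \<mu>)"
    using energy_le_initial[of s] energy_lower_bound[of T] sT by simp
  finally show ?thesis .
qed

lemma exists_nonpositive_varphi:
  assumes lam: "0 \<le> lam" "lam \<le> 1 / (2 * \<alpha>)" and gz: "g z \<noteq> 0"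
  shows "\<exists>t. 0 < t \<and> t \<le> exit_time_bound \<mu> L \<alpha> \<beta> \<and> varphi x \<alpha> lam t \<le> 0"
proof (rule ccontr)
  assume no_exit: "\<not> ?thesis"
  define s where "s = initial_time \<mu> L \<alpha> \<beta>"
  define T where "T = exit_time_bound \<mu> L \<alpha> \<beta>"
  define \<Lambda> where "\<Lambda> = 2 * (\<alpha> + 1)\<^sup>2 / (\<beta> * \<mu>\<^sup>2 * s ^ 3)"
  define c where "c = s * norm (g z) / (2 * (\<alpha> + 1))"
  define K where "K = s * (v s \<bullet> v s)"
  have s: "0 < s" "s \<le> 1"
    using initial_time_pos by (simp_all add: s_def)
  have \<Lambda>_nonneg: "\<Lambda> \<ge> 0"
    using beta_pos mu_pos s by (simp add: \<Lambda>_def)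
  have T_eq: "T = s * exp (\<Lambda> + 1)"
    by (simp add: T_def exit_time_bound_def s_def \<Lambda>_def)
  have "s * 1 \<le> s * exp (\<Lambda> + 1)"
    using s \<Lambda>_nonneg by (intro mult_left_mono) auto
  then have "s \<le> T"
    by (simp add: T_eq)
  moreover have "\<And>u. s < u \<Longrightarrow> u \<le> T \<Longrightarrow> varphi x \<alpha> lam u > 0"
    using no_exit s unfolding T_def by (metis not_le less_trans)
  ultimately have "\<beta> * \<mu> * K * (ln T - ln s) \<le> (norm (g z))\<^sup>2 / (2 * \<mu>)"
    unfolding K_def by (rule energy_loss_le_budget[OF lam s(1)])
  then have "\<beta> * \<mu> * K * (\<Lambda> + 1) \<le> (norm (g z))\<^sup>2 / (2 * \<mu>)"
    using s by (simp add: T_eq ln_mult)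
  also have "\<dots> = \<beta> * \<mu> * (s * c\<^sup>2) * \<Lambda>"
  proof -
    have identity: "(norm (g z))\<^sup>2 / (2 * \<mu>)
        = \<beta> * \<mu> * (s * (s * norm (g z) / (2 * q))\<^sup>2) * (2 * q\<^sup>2 / (\<beta> * \<mu>\<^sup>2 * s ^ 3))"
      if "q > 0" for q
      using that beta_pos mu_pos s by (simp add: field_simps power2_eq_square power3_eq_cube)
    show ?thesis
      unfolding \<Lambda>_def c_def by (rule identity) (use alpha_pos in simp)
  qed
  finally have "\<beta> * \<mu> * K * (\<Lambda> + 1) \<le> \<beta> * \<mu> * (s * c\<^sup>2) * \<Lambda>" .
  moreover have "s * c\<^sup>2 \<le> K"
    unfolding K_def power2_norm_eq_inner[symmetric] c_def
    using speed_at_initial_time s alpha_pos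
    by (intro mult_left_mono power_mono) (auto simp: s_def)
  then have "\<beta> * \<mu> * (s * c\<^sup>2) * (\<Lambda> + 1) \<le> \<beta> * \<mu> * K * (\<Lambda> + 1)"
    using beta_pos mu_pos \<Lambda>_nonneg by (intro mult_left_mono mult_right_mono) auto
  moreover have "0 < \<beta> * \<mu> * (s * c\<^sup>2)"
    using s gz alpha_pos beta_pos mu_pos by (simp add: c_def)
  ultimately show False
    by (simp add: algebra_simps)
qed

end

theorem mainTheorem8:
  fixes \<phi> :: "'a::euclidean_space \<Rightarrow> real"
    and g :: "'a \<Rightarrow> 'a"
    and H :: "'a \<Rightarrow> 'a \<Rightarrow>\<^sub>L 'a"
    and X :: "'a \<Rightarrow> real \<Rightarrow> 'a"
    and \<mu> L \<alpha> \<beta> lam :: real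
  assumes grad: "\<And>x. (\<phi> has_derivative (\<lambda>h. g x \<bullet> h)) (at x)"
    and hess: "\<And>x. (g has_derivative blinfun_apply (H x)) (at x)"
    and hess_cont: "continuous_on UNIV H"
    and mu_pos: "\<mu> > 0"
    and sconv: "strongly_convex_on \<mu> UNIV \<phi>"
    and lip: "L-lipschitz_on UNIV g"
    and sol: "\<And>z. is_solution g H \<alpha> \<beta> z (X z)"
    and alpha_pos: "\<alpha> > 0" and beta_pos: "\<beta> > 0"
    and lam: "0 \<le> lam" "lam \<le> 1" "lam \<le> 1 / (2 * \<alpha>)"
  shows "(SUP z \<in> - argmin_set \<phi>. T_lambda (X z) \<alpha> lam) < \<infinity>"
proof -
  have "T_lambda (X z) \<alpha> lam \<le> ereal (exit_time_bound \<mu> L \<alpha> \<beta>)" if z: "z \<notin> argmin_set \<phi>" for z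
  proof -
    obtain v a where "hessian_damped_trajectory \<phi> g H \<mu> L \<alpha> \<beta> (X z) v a z"
      using sol[of z] grad hess mu_pos sconv lip alpha_pos beta_pos
      unfolding is_solution_def hessian_damped_trajectory_def by blast
    then obtain t where t: "0 < t" "t \<le> exit_time_bound \<mu> L \<alpha> \<beta>" "varphi (X z) \<alpha> lam t \<le> 0"
      using hessian_damped_trajectory.exists_nonpositive_varphi lam
        strongly_convex_on_gradient_nonzero[OF grad sconv mu_pos z] by blast
    then have "T_lambda (X z) \<alpha> lam \<le> ereal t"
      unfolding T_lambda_def by (intro Inf_lower) auto
    then show ?thesis
      using t(2) by (simp add: order_trans)
  qed
  then have "(SUP z \<in> - argmin_set \<phi>. T_lambda (X z) \<alpha> lam) \<le> ereal (exit_time_bound \<mu> L \<alpha> \<beta>)"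
    by (intro SUP_least) auto
  then show ?thesis
    using le_less_trans by fastforce
qed

end
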